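(* Let $n\in\mathbb{N}$. (i) Let $S$ be a pseudo-symmetric numerical semigroup and $A\subseteq\{x\in S\mid \frac{\mathrm{F}(S)}{2}<x<\mathrm{F}(S)\}$ with $\#A=n$ such that $S\setminus A$ is a numerical semigroup. Then $\mathrm{l}(S\setminus A)=2n+1$. (ii) Conversely, for every numerical semigroup $T$ with $\mathrm{l}(T)=2n+1$ there exist a pseudo-symmetric numerical semigroup $S$ with $\mathrm{F}(S)=\mathrm{F}(T)$ and a set $A\subseteq\{x\in S\mid \frac{\mathrm{F}(S)}{2}<x<\mathrm{F}(S)\}$ with $\#A=n$ such that $T=S\setminus A$.
   Context: A numerical semigroup is a subset $S\subseteq\mathbb{N}$ closed under addition with $0\in S$ and $\mathbb{N}\setminus S$ finite; $\mathrm{F}(S)=\max(\mathbb{Z}\setminus S)$. $\mathrm{N}(S)=\{s\in S\mid s<\mathrm{F}(S)\}$, $\mathrm{L}(S)=\{x\in\mathbb{N}\setminus S\mid \mathrm{F}(S)-x\notin \mathrm{N}(S)\}$, $\mathrm{l}(S)=\#\mathrm{L}(S)$. A numerical semigroup is irreducible if it is not the intersection of two numerical semigroups properly containing it; pseudo-symmetric means irreducible with even Frobenius number. *)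

theory Defs
  imports Main
begin

definition numerical_semigroup :: "nat set \<Rightarrow> bool" where
  "numerical_semigroup S \<longleftrightarrow> 0 \<in> S \<and> (\<forall>x\<in>S. \<forall>y\<in>S. x + y \<in> S) \<and> finite (UNIV - S)"

text \<open>Frobenius number: the largest integer not in S (equal to -1 when S is all of N,
  since every negative integer lies outside S).\<close>
definition frob :: "nat set \<Rightarrow> int" where
  "frob S = Max (insert (-1) (int ` (UNIV - S)))"

definition smallN :: "nat set \<Rightarrow> nat set" where
  "smallN S = {s \<in> S. int s < frob S}"

definition bigL :: "nat set \<Rightarrow> nat set" where
  "bigL S = {x. x \<notin> S \<and> \<not> (\<exists>s \<in> smallN S. int s = frob S - int x)}"

definition smalll :: "nat set \<Rightarrow> nat" where
  "smalll S = card (bigL S)"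

definition irreducible_ns :: "nat set \<Rightarrow> bool" where
  "irreducible_ns S \<longleftrightarrow> numerical_semigroup S \<and>
     \<not> (\<exists>S1 S2. numerical_semigroup S1 \<and> numerical_semigroup S2 \<and>
          S \<subset> S1 \<and> S \<subset> S2 \<and> S = S1 \<inter> S2)"

definition pseudo_symmetric :: "nat set \<Rightarrow> bool" where
  "pseudo_symmetric S \<longleftrightarrow> irreducible_ns S \<and> even (frob S)"

end

theory Submission
  imports Defs
begin

text \<open>Write \<open>f\<close> for the Frobenius number. A numerical semigroup \<open>S\<close> is irreducible
  exactly when every gap \<open>x\<close> with \<open>2x \<noteq> f\<close> has \<open>f - x \<in> S\<close>; for pseudo-symmetric \<open>S\<close>
  the gaps are therefore \<open>f/2\<close> and pairs \<open>x, f - x\<close>. For any numerical semigroup \<open>T\<close>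
  with Frobenius number \<open>f\<close>, \<open>L(T)\<close> consists of the gaps \<open>x\<close> for which \<open>f - x\<close> is a gap
  too, so it is closed under \<open>x \<mapsto> f - x\<close> and its size is the number of its elements at
  \<open>f/2\<close> plus twice the number above \<open>f/2\<close>. Removing \<open>A\<close> from a pseudo-symmetric \<open>S\<close>
  gives \<open>L(S \ A) = {f/2} \<union> A \<union> (f - A)\<close>. Conversely, if \<open>l(T)\<close> is odd then \<open>f/2 \<in> L(T)\<close>,
  and adjoining to \<open>T\<close> the \<open>n\<close> elements of \<open>L(T)\<close> above \<open>f/2\<close> yields a semigroup whose
  gaps are symmetric in this sense, i.e. a pseudo-symmetric one.\<close>

lemma numerical_semigroup_zero: "numerical_semigroup S \<Longrightarrow> 0 \<in> S"
  unfolding numerical_semigroup_def by blast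

lemma numerical_semigroup_add:
  "numerical_semigroup S \<Longrightarrow> x \<in> S \<Longrightarrow> y \<in> S \<Longrightarrow> x + y \<in> S"
  unfolding numerical_semigroup_def by blast

lemma numerical_semigroup_finite_gaps: "numerical_semigroup S \<Longrightarrow> finite (UNIV - S)"
  unfolding numerical_semigroup_def by blast

lemma numerical_semigroup_Un:
  assumes ns: "numerical_semigroup S"
    and AA: "\<And>a b. a \<in> A \<Longrightarrow> b \<in> A \<Longrightarrow> a + b \<in> S \<union> A"
    and AS: "\<And>a s. a \<in> A \<Longrightarrow> s \<in> S \<Longrightarrow> a + s \<in> S \<union> A"
  shows "numerical_semigroup (S \<union> A)"
  unfolding numerical_semigroup_def
proof (intro conjI ballI)
  show "0 \<in> S \<union> A" using numerical_semigroup_zero[OF ns] by simp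
  show "finite (UNIV - (S \<union> A))"
    using numerical_semigroup_finite_gaps[OF ns] by (rule finite_subset[rotated]) blast
  fix x y assume "x \<in> S \<union> A" "y \<in> S \<union> A"
  then show "x + y \<in> S \<union> A"
    using AA AS[of x y] AS[of y x] numerical_semigroup_add[OF ns, of x y]
    by (auto simp: add.commute)
qed

lemma frob_eqI:
  assumes "finite (UNIV - S)" "f \<notin> S" "\<forall>x>f. x \<in> S"
  shows "frob S = int f"
  unfolding frob_def
proof (rule Max_eqI)
  show "finite (insert (- 1) (int ` (UNIV - S)))" using assms(1) by simp
  show "int f \<in> insert (- 1) (int ` (UNIV - S))" using assms(2) by simp
  fix y assume "y \<in> insert (- 1) (int ` (UNIV - S))"
  then show "y \<le> int f" using assms(3) by (auto simp: not_less[symmetric])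
qed

lemma frob_UNIV: "frob UNIV = -1"
  unfolding frob_def by simp

lemma obtain_frob:
  assumes "numerical_semigroup S" "S \<noteq> UNIV"
  obtains f where "f \<notin> S" "\<forall>x>f. x \<in> S" "frob S = int f"
proof -
  have fin: "finite (UNIV - S)" using numerical_semigroup_finite_gaps[OF assms(1)] .
  define f where "f = Max (UNIV - S)"
  have "f \<notin> S" using Max_in[OF fin] assms(2) f_def by blast
  moreover have "\<forall>x>f. x \<in> S" using Max_ge[OF fin] f_def by (meson DiffI UNIV_I not_le)
  ultimately show ?thesis using that frob_eqI[OF fin] by blast
qed

text \<open>Since \<open>0 \<in> T\<close>, the condition \<open>f - x \<notin> T\<close> excludes \<open>x = f\<close>, so truncated
  subtraction does no harm here.\<close>

lemma bigL_eq:
  assumes ns: "numerical_semigroup T" and frob_T: "frob T = int f" and above: "\<forall>x>f. x \<in> T"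
  shows "bigL T = {x. x \<notin> T \<and> x \<le> f \<and> f - x \<notin> T}"
proof -
  have "0 \<in> T" using numerical_semigroup_zero[OF ns] .
  have dual: "(\<exists>s \<in> smallN T. int s = frob T - int x) \<longleftrightarrow> f - x \<in> T"
    if "x \<notin> T" "x \<le> f" for x
  proof -
    have "x \<noteq> 0" using that(1) \<open>0 \<in> T\<close> by metis
    have "s \<in> smallN T \<and> int s = frob T - int x \<longleftrightarrow> s = f - x \<and> s \<in> T" for s
    proof -
      have "int s = int f - int x \<longleftrightarrow> s = f - x" using that(2) by linarith
      moreover have "f - x < f" using \<open>x \<noteq> 0\<close> that(2) by simp
      ultimately show ?thesis unfolding smallN_def frob_T by auto
    qed
    then show ?thesis by (metis (no_types))
  qed
  have "x \<in> bigL T \<longleftrightarrow> x \<notin> T \<and> x \<le> f \<and> f - x \<notin> T" for x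
  proof (cases "x \<notin> T \<and> x \<le> f")
    case True
    then show ?thesis unfolding bigL_def mem_Collect_eq using dual[of x] by blast
  next
    case False
    then show ?thesis using above by (auto simp: bigL_def not_le)
  qed
  then show ?thesis by auto
qed

lemma card_reflection_closed:
  fixes L :: "nat set"
  assumes "finite L" and refl: "\<And>x. x \<in> L \<Longrightarrow> x \<le> f \<and> f - x \<in> L"
  shows "card L = card {x \<in> L. 2 * x = f} + 2 * card {x \<in> L. f < 2 * x}"
proof -
  let ?M = "{x \<in> L. 2 * x = f}" and ?U = "{x \<in> L. f < 2 * x}" and ?D = "{x \<in> L. 2 * x < f}"
  have "?D = (\<lambda>x. f - x) ` ?U"
  proof (intro set_eqI iffI)
    fix x assume "x \<in> ?D"
    then have "f - x \<in> ?U" "x = f - (f - x)" using refl[of x] by auto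
    then show "x \<in> (\<lambda>x. f - x) ` ?U" by blast
  qed (force dest: refl)
  moreover have "inj_on (\<lambda>x. f - x) ?U"
    by (intro inj_onI) (metis (no_types, lifting) refl mem_Collect_eq diff_diff_cancel)
  ultimately have "card ?D = card ?U" by (simp add: card_image)
  have "card L = card (?M \<union> ?U \<union> ?D)" by (rule arg_cong[where f = card]) auto
  also have "\<dots> = card ?M + card ?U + card ?D"
    using \<open>finite L\<close> by (simp add: card_Un_disjoint disjoint_iff)
  finally show ?thesis using \<open>card ?D = card ?U\<close> by simp
qed

lemma smalll_eq_card_halves:
  assumes ns: "numerical_semigroup T" and "frob T = int f" and above: "\<forall>x>f. x \<in> T"
  shows "smalll T = card {x \<in> bigL T. 2 * x = f} + 2 * card {x \<in> bigL T. f < 2 * x}"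
  unfolding smalll_def
proof (rule card_reflection_closed)
  note L = bigL_eq[OF assms]
  have "bigL T \<subseteq> UNIV - T" unfolding bigL_def by blast
  then show "finite (bigL T)" using numerical_semigroup_finite_gaps[OF ns] by (rule finite_subset)
  fix x assume "x \<in> bigL T"
  then have "x \<notin> T" "x \<le> f" "f - x \<notin> T" unfolding L by auto
  moreover have "f - (f - x) = x" using \<open>x \<le> f\<close> by simp
  ultimately show "x \<le> f \<and> f - x \<in> bigL T" unfolding L by simp
qed

lemma irreducible_nsI:
  assumes ns: "numerical_semigroup S" and "f \<notin> S" and above: "\<forall>x>f. x \<in> S"
    and sym: "\<And>x. x \<notin> S \<Longrightarrow> 2 * x \<noteq> f \<Longrightarrow> f - x \<in> S"
  shows "irreducible_ns S"
proof -
  have "f \<in> S'" if ns': "numerical_semigroup S'" and "S \<subset> S'" for S'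
  proof -
    obtain x where x: "x \<in> S'" "x \<notin> S" using \<open>S \<subset> S'\<close> by blast
    have "x \<le> f" using x above not_le by blast
    show ?thesis
    proof (cases "2 * x = f")
      case True
      then show ?thesis using numerical_semigroup_add[OF ns' x(1) x(1)] by (simp add: mult_2)
    next
      case False
      then have "f - x \<in> S'" using sym x \<open>S \<subset> S'\<close> by blast
      then show ?thesis using numerical_semigroup_add[OF ns' x(1)] \<open>x \<le> f\<close> by fastforce
    qed
  qed
  then show ?thesis unfolding irreducible_ns_def using ns \<open>f \<notin> S\<close> by blast
qed

text \<open>A maximal gap \<open>h\<close> violating the symmetry can be adjoined to \<open>S\<close>, and
  so can the Frobenius number; \<open>S\<close> is the intersection of the two enlargements.\<close>

lemma irreducible_ns_gap_reflect:
  assumes irr: "irreducible_ns S" and "f \<notin> S" and above: "\<forall>x>f. x \<in> S"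
    and "x \<notin> S" "2 * x \<noteq> f"
  shows "f - x \<in> S"
proof (rule ccontr)
  assume "f - x \<notin> S"
  have ns: "numerical_semigroup S" using irr unfolding irreducible_ns_def by blast
  have "0 \<in> S" using numerical_semigroup_zero[OF ns] .
  define B where "B = {h. h \<notin> S \<and> 2 * h \<noteq> f \<and> f - h \<notin> S}"
  have "finite B"
    using numerical_semigroup_finite_gaps[OF ns] by (rule finite_subset[rotated]) (auto simp: B_def)
  have "x \<in> B" using assms(4,5) \<open>f - x \<notin> S\<close> by (simp add: B_def)
  define h where "h = Max B"
  have "h \<in> B" and h_max: "\<And>y. y \<in> B \<Longrightarrow> y \<le> h"
    using Max_in[OF \<open>finite B\<close>] Max_ge[OF \<open>finite B\<close>] \<open>x \<in> B\<close> h_def by blast+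
  then have h: "h \<notin> S" "2 * h \<noteq> f" "f - h \<notin> S" by (auto simp: B_def)
  have "h \<le> f" using h(1) above not_le by blast
  have "f - h \<in> B" using h \<open>h \<le> f\<close> by (auto simp: B_def)
  then have "f < 2 * h" using h_max[of "f - h"] h(2) by linarith
  have "h \<noteq> f" using h(3) \<open>0 \<in> S\<close> by auto
  have h_add: "h + s \<in> S \<union> {h}" if "s \<in> S" for s
  proof (rule ccontr)
    assume out: "h + s \<notin> S \<union> {h}"
    then have "h + s \<le> f" using above not_le by blast
    have "f - (h + s) \<notin> S"
    proof
      assume "f - (h + s) \<in> S"
      then have "f - (h + s) + s \<in> S" using numerical_semigroup_add[OF ns] that by blast
      then show False using h(3) \<open>h + s \<le> f\<close> by simp
    qed
    then have "h + s \<in> B" using out \<open>f < 2 * h\<close> by (auto simp: B_def)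
    then show False using h_max out by fastforce
  qed
  have "numerical_semigroup (S \<union> {h})"
    using \<open>f < 2 * h\<close> above h_add by (intro numerical_semigroup_Un[OF ns]) auto
  moreover have "numerical_semigroup (S \<union> {f})"
  proof (rule numerical_semigroup_Un[OF ns])
    have "0 < f" using \<open>f \<notin> S\<close> \<open>0 \<in> S\<close> by (cases f) auto
    then show "a + b \<in> S \<union> {f}" if "a \<in> {f}" "b \<in> {f}" for a b using that above by simp
    show "a + s \<in> S \<union> {f}" if "a \<in> {f}" "s \<in> S" for a s
      using that above by (cases "s = 0") auto
  qed
  moreover have "S \<subset> S \<union> {h}" "S \<subset> S \<union> {f}" "S = (S \<union> {h}) \<inter> (S \<union> {f})"
    using h(1) \<open>f \<notin> S\<close> \<open>h \<noteq> f\<close> by auto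
  ultimately show False using irr unfolding irreducible_ns_def by blast
qed

lemma smalll_pseudo_symmetric_Diff:
  assumes ps: "pseudo_symmetric S"
    and A: "A \<subseteq> {x \<in> S. frob S < 2 * int x \<and> int x < frob S}"
    and ns_T: "numerical_semigroup (S - A)"
  shows "smalll (S - A) = 2 * card A + 1"
proof -
  have irr: "irreducible_ns S" and "even (frob S)"
    using ps unfolding pseudo_symmetric_def by auto
  have ns: "numerical_semigroup S" using irr unfolding irreducible_ns_def by blast
  have "S \<noteq> UNIV" using \<open>even (frob S)\<close> frob_UNIV by auto
  then obtain f where "f \<notin> S" and above: "\<forall>x>f. x \<in> S" and "frob S = int f"
    using obtain_frob[OF ns] by blast
  then obtain k where "f = 2 * k" using \<open>even (frob S)\<close> by (metis even_of_nat evenE)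
  have A_range: "a \<in> S \<and> k < a \<and> a < f" if "a \<in> A" for a
    using A that \<open>frob S = int f\<close> \<open>f = 2 * k\<close> by auto
  have "f \<notin> S - A" "\<forall>x>f. x \<in> S - A" using \<open>f \<notin> S\<close> above A_range by force+
  then have "frob (S - A) = int f" using frob_eqI[OF numerical_semigroup_finite_gaps[OF ns_T]] by blast
  note L = bigL_eq[OF ns_T this \<open>\<forall>x>f. x \<in> S - A\<close>]
  have dual_gap: "f - a \<notin> S" if "a \<in> S" "a < f" for a
    using numerical_semigroup_add[OF ns that(1), of "f - a"] that(2) \<open>f \<notin> S\<close> by auto
  have upper: "{x \<in> bigL (S - A). f < 2 * x} = A"
  proof (intro set_eqI iffI)
    fix x assume "x \<in> {x \<in> bigL (S - A). f < 2 * x}"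
    then have x: "x \<notin> S - A" "x \<le> f" "f - x \<notin> S - A" "f < 2 * x" unfolding L by auto
    show "x \<in> A"
    proof (rule ccontr)
      assume "x \<notin> A"
      then have "f - x \<in> S"
        using irreducible_ns_gap_reflect[OF irr \<open>f \<notin> S\<close> above] x by auto
      then have "k < f - x" using x(3) A_range by blast
      then show False using x(4) \<open>f = 2 * k\<close> by linarith
    qed
  next
    fix x assume "x \<in> A"
    then show "x \<in> {x \<in> bigL (S - A). f < 2 * x}"
      using A_range[OF \<open>x \<in> A\<close>] dual_gap[of x] \<open>f = 2 * k\<close> unfolding L by auto
  qed
  have middle: "{x \<in> bigL (S - A). 2 * x = f} = {k}"
  proof -
    have "k \<notin> S"
      using numerical_semigroup_add[OF ns, of k k] \<open>f \<notin> S\<close> \<open>f = 2 * k\<close> by (auto simp: mult_2)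
    then show ?thesis unfolding L using \<open>f = 2 * k\<close> by auto
  qed
  show ?thesis
    using smalll_eq_card_halves[OF ns_T \<open>frob (S - A) = int f\<close> \<open>\<forall>x>f. x \<in> S - A\<close>]
    unfolding upper middle by simp
qed

lemma dual_gap_add:
  assumes ns: "numerical_semigroup T" and above: "\<forall>x>f. x \<in> T"
    and "f - x \<notin> T" "y \<in> T" "x + y \<notin> T"
  shows "x + y \<le> f \<and> f - (x + y) \<notin> T"
proof
  show "x + y \<le> f" using assms(5) above not_le by blast
  show "f - (x + y) \<notin> T"
  proof
    assume "f - (x + y) \<in> T"
    then have "f - (x + y) + y \<in> T" using numerical_semigroup_add[OF ns] assms(4) by blast
    then show False using assms(3) \<open>x + y \<le> f\<close> by simp
  qed
qed

lemma numerical_semigroup_Un_upper_bigL: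
  assumes ns: "numerical_semigroup T" and "frob T = int f" and above: "\<forall>x>f. x \<in> T"
  shows "numerical_semigroup (T \<union> {x \<in> bigL T. f < 2 * x})"
proof (rule numerical_semigroup_Un[OF ns])
  note L = bigL_eq[OF assms]
  fix a assume "a \<in> {x \<in> bigL T. f < 2 * x}"
  then have a: "a \<notin> T" "f - a \<notin> T" "f < 2 * a" unfolding L by auto
  show "a + b \<in> T \<union> {x \<in> bigL T. f < 2 * x}" if "b \<in> {x \<in> bigL T. f < 2 * x}" for b
    using that a(3) above unfolding L by auto
  show "a + s \<in> T \<union> {x \<in> bigL T. f < 2 * x}" if "s \<in> T" for s
    using dual_gap_add[OF ns above a(2) that] a(3) unfolding L by auto
qed

lemma irreducible_ns_Un_upper_bigL:
  assumes ns: "numerical_semigroup T" and frob_T: "frob T = int f"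
    and "f \<notin> T" and above: "\<forall>x>f. x \<in> T"
  shows "irreducible_ns (T \<union> {x \<in> bigL T. f < 2 * x})" (is "irreducible_ns (T \<union> ?A)")
proof (rule irreducible_nsI)
  note L = bigL_eq[OF ns frob_T above]
  show "numerical_semigroup (T \<union> ?A)"
    by (rule numerical_semigroup_Un_upper_bigL[OF ns frob_T above])
  show "f \<notin> T \<union> ?A" using \<open>f \<notin> T\<close> numerical_semigroup_zero[OF ns] unfolding L by auto
  show "\<forall>x>f. x \<in> T \<union> ?A" using above by blast
  fix x assume x: "x \<notin> T \<union> ?A" "2 * x \<noteq> f"
  show "f - x \<in> T \<union> ?A"
  proof (rule ccontr)
    assume "f - x \<notin> T \<union> ?A"
    have "x \<le> f" using x(1) above not_le by blast
    then have "f - (f - x) = x" by simp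
    then have "x \<in> bigL T" "f - x \<in> bigL T"
      using x(1) \<open>f - x \<notin> T \<union> ?A\<close> \<open>x \<le> f\<close> unfolding L by auto
    moreover have "x \<notin> ?A" "f - x \<notin> ?A" using x(1) \<open>f - x \<notin> T \<union> ?A\<close> by auto
    ultimately show False using x(2) \<open>x \<le> f\<close> by auto
  qed
qed

lemma ex_pseudo_symmetric_Diff:
  assumes ns: "numerical_semigroup T" and l: "smalll T = 2 * n + 1"
  shows "\<exists>S A. pseudo_symmetric S \<and> frob S = frob T
            \<and> A \<subseteq> {x \<in> S. frob S < 2 * int x \<and> int x < frob S}
            \<and> card A = n \<and> T = S - A"
proof -
  have "T \<noteq> UNIV" using l unfolding smalll_def bigL_def by auto
  then obtain f where "f \<notin> T" and above: "\<forall>x>f. x \<in> T" and "frob T = int f"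
    using obtain_frob[OF ns] by blast
  note L = bigL_eq[OF ns \<open>frob T = int f\<close> above]
  have "0 \<in> T" using numerical_semigroup_zero[OF ns] .
  define A where "A = {x \<in> bigL T. f < 2 * x}"
  have A_range: "a \<notin> T \<and> f - a \<notin> T \<and> f < 2 * a \<and> a < f" if "a \<in> A" for a
    using that \<open>0 \<in> T\<close> unfolding A_def L by (cases "a = f") auto
  have "{x \<in> bigL T. 2 * x = f} \<subseteq> {f div 2}" by auto
  then have "card {x \<in> bigL T. 2 * x = f} \<le> 1" using card_mono[of "{f div 2}"] by simp
  moreover have "smalll T = card {x \<in> bigL T. 2 * x = f} + 2 * card A"
    unfolding A_def by (rule smalll_eq_card_halves[OF ns \<open>frob T = int f\<close> above])
  ultimately have "card {x \<in> bigL T. 2 * x = f} = 1" and "card A = n"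
    using l by presburger+
  then have "even f"
    by (metis (mono_tags, lifting) card.empty empty_Collect_eq dvd_triv_left zero_neq_one)
  define S where "S = T \<union> A"
  have ns_S: "numerical_semigroup S"
    unfolding S_def A_def by (rule numerical_semigroup_Un_upper_bigL[OF ns \<open>frob T = int f\<close> above])
  have "f \<notin> S" "\<forall>x>f. x \<in> S" using \<open>f \<notin> T\<close> above A_range unfolding S_def by auto
  then have "frob S = int f" using frob_eqI[OF numerical_semigroup_finite_gaps[OF ns_S]] by blast
  have "pseudo_symmetric S"
    using irreducible_ns_Un_upper_bigL[OF ns \<open>frob T = int f\<close> \<open>f \<notin> T\<close> above] \<open>even f\<close> \<open>frob S = int f\<close>
    unfolding pseudo_symmetric_def S_def A_def by simp
  moreover have "A \<subseteq> {x \<in> S. frob S < 2 * int x \<and> int x < frob S}"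
    using A_range \<open>frob S = int f\<close> unfolding S_def by force
  moreover have "T = S - A" using A_range unfolding S_def by blast
  ultimately show ?thesis using \<open>card A = n\<close> \<open>frob S = int f\<close> \<open>frob T = int f\<close>
    by (intro exI[of _ S] exI[of _ A]) simp
qed

theorem proposition22:
  fixes n :: nat
  shows "(\<forall>S A. pseudo_symmetric S
            \<and> A \<subseteq> {x \<in> S. frob S < 2 * int x \<and> int x < frob S}
            \<and> card A = n \<and> numerical_semigroup (S - A)
          \<longrightarrow> smalll (S - A) = 2 * n + 1)
       \<and> (\<forall>T. numerical_semigroup T \<and> smalll T = 2 * n + 1 \<longrightarrow>
          (\<exists>S A. pseudo_symmetric S \<and> frob S = frob T
            \<and> A \<subseteq> {x \<in> S. frob S < 2 * int x \<and> int x < frob S}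
            \<and> card A = n \<and> T = S - A))"
  using smalll_pseudo_symmetric_Diff ex_pseudo_symmetric_Diff by blast

end
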